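(* For $n\geq 1$, the polynomials $\widehat{A}_n(t,q)$ satisfy $$2\widehat{A}_{n+1}(t,q)=(1+tq)\widehat{A}_n(tq,q)+(1+tq^n)\widehat{A}_n(t,q)+\sum_{i=1}^{n-1}(1+t^2q^{2i+1})\binom{n}{i}\widehat{A}_i(t,q)\widehat{A}_{n-i}(tq^{i+1},q),$$ with $\widehat{A}_1(t,q)=1$.
   Context: For $\pi=\pi_1\cdots\pi_n\in\mathfrak{S}_n$ (permutations of $\{1,\dots,n\}$), $\widehat{D}(\pi)=\{2i:\pi_{2i}<\pi_{2i+1}\}\cup\{2i+1:\pi_{2i+1}>\pi_{2i+2}\}$ (indices in $\{1,\dots,n-1\}$), ${\rm altdes}(\pi)=|\widehat{D}(\pi)|$, ${\rm altmaj}(\pi)=\sum_{i\in\widehat{D}(\pi)}i$, and $\widehat{A}_n(t,q)=\sum_{\pi\in\mathfrak{S}_n}t^{{\rm altdes}(\pi)}q^{{\rm altmaj}(\pi)}$. *)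

theory Defs
  imports "HOL-Combinatorics.Multiset_Permutations"
begin

text \<open>A permutation pi = pi_1 ... pi_n of {1..n} is a list xs with xs ! (i-1) = pi_i.\<close>
definition altD :: "nat list \<Rightarrow> nat set" where
  "altD xs = {i \<in> {1..<length xs}.
      (even i \<and> xs ! (i - 1) < xs ! i) \<or> (odd i \<and> xs ! (i - 1) > xs ! i)}"

definition altdes :: "nat list \<Rightarrow> nat" where
  "altdes xs = card (altD xs)"

definition altmaj :: "nat list \<Rightarrow> nat" where
  "altmaj xs = \<Sum> (altD xs)"

text \<open>The bivariate polynomial Ahat_n(t,q), represented by its evaluation at arbitrary
  elements t, q of an arbitrary commutative ring.\<close>
definition Ahat :: "nat \<Rightarrow> 'a::comm_ring_1 \<Rightarrow> 'a \<Rightarrow> 'a" where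
  "Ahat n t q = (\<Sum>xs\<in>permutations_of_set {1..n}. t ^ altdes xs * q ^ altmaj xs)"

end

theory Submission
  imports Defs
begin

text \<open>Split a permutation of \<open>{1..n+1}\<close> at its largest letter \<open>n+1\<close>, or alternatively at its
  smallest letter \<open>1\<close>, into a prefix of length \<open>i\<close> and a suffix of length \<open>n - i\<close>.
  The alternating descent monomial factors into that of the prefix, a factor for the two
  positions \<open>i, i+1\<close> next to the extremal letter, and that of the suffix read from position
  \<open>i+2\<close>; after standardisation, and complementation when the shift is odd, the suffixes
  contribute \<open>Ahat (n-i) (t q^(i+1)) q\<close>. The boundary factor is nontrivial only for even \<open>i\<close>
  at the maximum and only for odd \<open>i\<close> at the minimum, so adding the two decompositions
  gives the recurrence.\<close>

definition alt_factor :: "'a::comm_ring_1 \<Rightarrow> 'a \<Rightarrow> nat \<Rightarrow> nat \<Rightarrow> nat \<Rightarrow> 'a" where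
  "alt_factor t q k x y = (if (even k \<and> x < y) \<or> (odd k \<and> y < x) then t * q ^ k else 1)"

text \<open>The alternating descent monomial of a word whose first letter sits at position \<open>k\<close>.\<close>

fun alt_weight :: "'a::comm_ring_1 \<Rightarrow> 'a \<Rightarrow> nat \<Rightarrow> nat list \<Rightarrow> 'a" where
  "alt_weight t q k (x # y # r) = alt_factor t q k x y * alt_weight t q (Suc k) (y # r)"
| "alt_weight t q k _ = 1"

lemma alt_weight_append:
  "alt_weight t q k (xs @ y # ys) = alt_weight t q k (xs @ [y]) * alt_weight t q (k + length xs) (y # ys)"
proof (induction xs arbitrary: k)
  case (Cons a xs)
  then show ?case by (cases xs) (auto simp: mult.assoc)
qed simp

lemma alt_weight_shift_even:
  "even s \<Longrightarrow> alt_weight t q (k + s) xs = alt_weight (t * q ^ s) q k xs"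
  by (induction t q k xs rule: alt_weight.induct) (auto simp: alt_factor_def power_add mult_ac)

text \<open>An odd shift swaps the parities of all positions, which complementing the letters undoes.\<close>

lemma alt_weight_shift_odd:
  "odd s \<Longrightarrow> \<forall>x\<in>set xs. x \<le> c \<Longrightarrow>
    alt_weight t q (k + s) xs = alt_weight (t * q ^ s) q k (map (\<lambda>x. c - x) xs)"
  by (induction t q k xs rule: alt_weight.induct) (auto simp: alt_factor_def power_add mult_ac)

lemma alt_weight_map_strict_mono:
  "strict_mono_on (set xs) f \<Longrightarrow> alt_weight t q k (map f xs) = alt_weight t q k xs"
proof (induction t q k xs rule: alt_weight.induct)
  case (1 t q k x y r)
  have "x < y \<Longrightarrow> f x < f y" "y < x \<Longrightarrow> f y < f x"
    using "1.prems" by (auto intro: strict_mono_onD)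
  then have "f x < f y \<longleftrightarrow> x < y" "f y < f x \<longleftrightarrow> y < x"
    by (cases x y rule: linorder_cases; auto)+
  moreover have "strict_mono_on (set (y # r)) f"
    using "1.prems" by (rule monotone_on_subset) auto
  ultimately show ?case
    using "1.IH" by (simp add: alt_factor_def)
qed auto

lemma alt_weight_eq_prod:
  "alt_weight t q k xs = (\<Prod>j<length xs - 1. alt_factor t q (k + j) (xs ! j) (xs ! Suc j))"
  by (induction t q k xs rule: alt_weight.induct)
    (simp_all add: prod.lessThan_Suc_shift del: prod.lessThan_Suc)

lemma power_altdes_altmaj: "t ^ altdes xs * q ^ altmaj xs = alt_weight t q 1 xs"
proof -
  let ?L = "length xs"
  have "t ^ altdes xs * q ^ altmaj xs = (\<Prod>i\<in>altD xs. t * q ^ i)"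
    by (simp add: altdes_def altmaj_def prod.distrib power_sum)
  also have "\<dots> = (\<Prod>i\<in>{1..<?L}. if i \<in> altD xs then t * q ^ i else 1)"
    by (subst prod.If_cases) (auto simp: altD_def intro!: prod.cong)
  also have "\<dots> = (\<Prod>i\<in>{1..<?L}. alt_factor t q i (xs ! (i - 1)) (xs ! i))"
    by (intro prod.cong) (auto simp: altD_def alt_factor_def)
  also have "\<dots> = (\<Prod>j<?L - 1. alt_factor t q (1 + j) (xs ! j) (xs ! Suc j))"
  proof (cases ?L)
    case (Suc m)
    then show ?thesis
      using prod.shift_bounds_nat_ivl[of "\<lambda>i. alt_factor t q i (xs ! (i - 1)) (xs ! i)" 0 1 m]
      by (simp add: add.commute atLeast0LessThan)
  qed simp
  also have "\<dots> = alt_weight t q 1 xs"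
    by (simp add: alt_weight_eq_prod)
  finally show ?thesis .
qed

lemma Ahat_eq_sum_alt_weight: "Ahat n t q = (\<Sum>\<pi>\<in>permutations_of_set {1..n}. alt_weight t q 1 \<pi>)"
  by (simp add: Ahat_def power_altdes_altmaj)

lemma Ahat_0: "Ahat 0 t q = 1"
  by (simp add: Ahat_def altdes_def altmaj_def altD_def)

lemma Ahat_1: "Ahat 1 t q = 1"
  by (simp add: Ahat_def altdes_def altmaj_def altD_def)

text \<open>The factor contributed by the positions \<open>i\<close> and \<open>i+1\<close> around a letter that is larger
  (\<open>b\<close>) or smaller (\<open>\<not> b\<close>) than all other \<open>n\<close> letters and sits at position \<open>i+1\<close>.\<close>

definition extremum_weight :: "bool \<Rightarrow> nat \<Rightarrow> 'a::comm_ring_1 \<Rightarrow> 'a \<Rightarrow> nat \<Rightarrow> 'a" where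
  "extremum_weight b n t q i =
     (if 0 < i \<and> even i = b then t * q ^ i else 1) * (if i < n \<and> even i = b then t * q ^ Suc i else 1)"

lemma alt_weight_insert_extremum:
  assumes "\<forall>x \<in> set \<sigma> \<union> set \<tau>. if b then x < m else m < x"
  shows "alt_weight t q 1 (\<sigma> @ m # \<tau>) =
    alt_weight t q 1 \<sigma> * extremum_weight b (length \<sigma> + length \<tau>) t q (length \<sigma>)
      * alt_weight t q (Suc (Suc (length \<sigma>))) \<tau>"
proof -
  have left: "alt_weight t q 1 (\<sigma> @ [m]) =
      alt_weight t q 1 \<sigma> * (if 0 < length \<sigma> \<and> even (length \<sigma>) = b then t * q ^ length \<sigma> else 1)"
  proof (cases \<sigma> rule: rev_exhaust)
    case (snoc \<rho> x)
    have "alt_weight t q 1 (\<rho> @ [x, m]) = alt_weight t q 1 (\<rho> @ [x]) * alt_weight t q (1 + length \<rho>) [x, m]"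
      using alt_weight_append[of t q 1 \<rho> x "[m]"] by simp
    then show ?thesis
      using assms snoc by (auto simp: alt_factor_def)
  qed simp
  have right: "alt_weight t q (1 + length \<sigma>) (m # \<tau>) =
      (if \<tau> \<noteq> [] \<and> even (length \<sigma>) = b then t * q ^ Suc (length \<sigma>) else 1)
        * alt_weight t q (Suc (Suc (length \<sigma>))) \<tau>"
    using assms by (cases \<tau>) (auto simp: alt_factor_def)
  have "extremum_weight b (length \<sigma> + length \<tau>) t q (length \<sigma>) =
      (if 0 < length \<sigma> \<and> even (length \<sigma>) = b then t * q ^ length \<sigma> else 1)
      * (if \<tau> \<noteq> [] \<and> even (length \<sigma>) = b then t * q ^ Suc (length \<sigma>) else 1)"
    by (simp add: extremum_weight_def)
  then show ?thesis
    using alt_weight_append[of t q 1 \<sigma> m \<tau>] by (simp only: left right mult.assoc)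
qed

lemma sum_permutations_of_set_image:
  assumes "inj_on f A"
  shows "(\<Sum>xs\<in>permutations_of_set (f ` A). g xs) = (\<Sum>xs\<in>permutations_of_set A. g (map f xs))"
proof -
  have "inj_on (map f) (permutations_of_set A)"
    by (rule inj_on_mapI, rule inj_on_subset[OF assms]) (auto simp: permutations_of_set_def)
  then show ?thesis
    by (simp add: permutations_of_set_image_inj[OF assms] sum.reindex)
qed

lemma sum_alt_weight_permutations_standardize:
  assumes "finite B"
  shows "(\<Sum>\<tau>\<in>permutations_of_set B. alt_weight t q k \<tau>) =
    (\<Sum>\<tau>\<in>permutations_of_set {1..card B}. alt_weight t q k \<tau>)"
proof -
  define f where "f j = sorted_list_of_set B ! (j - 1)" for j
  have mono: "strict_mono_on {1..card B} f"
  proof (rule strict_mono_onI)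
    fix r s assume "r \<in> {1..card B}" "s \<in> {1..card B}" "r < s"
    then have "r - 1 < s - 1" "s - 1 < length (sorted_list_of_set B)"
      using assms by auto
    with strict_sorted_list_of_set show "f r < f s"
      unfolding f_def by (rule sorted_wrt_nth_less)
  qed
  have "f ` {1..card B} = B"
  proof -
    have "bij_betw ((!) (sorted_list_of_set B)) {..<card B} B"
      using assms by (intro bij_betw_nth) auto
    moreover have "f ` {1..card B} = (!) (sorted_list_of_set B) ` {..<card B}"
      unfolding image_Suc_lessThan[symmetric] image_image f_def by simp
    ultimately show ?thesis
      by (simp add: bij_betw_imp_surj_on)
  qed
  then have "(\<Sum>\<tau>\<in>permutations_of_set B. alt_weight t q k \<tau>) =
      (\<Sum>\<tau>\<in>permutations_of_set {1..card B}. alt_weight t q k (map f \<tau>))"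
    using sum_permutations_of_set_image[OF strict_mono_on_imp_inj_on[OF mono]] by simp
  also have "\<dots> = (\<Sum>\<tau>\<in>permutations_of_set {1..card B}. alt_weight t q k \<tau>)"
    using mono by (intro sum.cong refl alt_weight_map_strict_mono)
      (auto dest: permutations_of_setD intro: monotone_on_subset)
  finally show ?thesis .
qed

lemma sum_alt_weight_permutations_shift:
  "(\<Sum>\<tau>\<in>permutations_of_set {1..m}. alt_weight t q (k + s) \<tau>) =
    (\<Sum>\<tau>\<in>permutations_of_set {1..m}. alt_weight (t * q ^ s) q k \<tau>)"
proof (cases "even s")
  case True
  then show ?thesis by (simp add: alt_weight_shift_even)
next
  case False
  let ?c = "\<lambda>x. Suc m - x"
  have "bij_betw ?c {1..m} {1..m}"
    by (rule bij_betw_byWitness[where f' = ?c]) auto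
  then have inj: "inj_on ?c {1..m}" and image: "?c ` {1..m} = {1..m}"
    by (simp_all add: bij_betw_def)
  have "(\<Sum>\<tau>\<in>permutations_of_set {1..m}. alt_weight t q (k + s) \<tau>) =
      (\<Sum>\<tau>\<in>permutations_of_set {1..m}. alt_weight (t * q ^ s) q k (map ?c \<tau>))"
    using False by (intro sum.cong refl alt_weight_shift_odd) (auto dest: permutations_of_setD)
  also have "\<dots> = (\<Sum>\<tau>\<in>permutations_of_set (?c ` {1..m}). alt_weight (t * q ^ s) q k \<tau>)"
    by (rule sum_permutations_of_set_image[OF inj, symmetric])
  finally show ?thesis
    by (simp only: image)
qed

lemma sum_alt_weight_permutations_eq_Ahat:
  assumes "finite B"
  shows "(\<Sum>\<tau>\<in>permutations_of_set B. alt_weight t q (Suc s) \<tau>) = Ahat (card B) (t * q ^ s) q"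
  using sum_alt_weight_permutations_standardize[OF assms, of t q "Suc s"]
    sum_alt_weight_permutations_shift[where m = "card B" and k = 1]
  by (simp add: Ahat_eq_sum_alt_weight)

lemma append_Cons_in_permutations_of_set_insert_iff:
  assumes "m \<notin> S"
  shows "\<sigma> @ m # \<tau> \<in> permutations_of_set (insert m S) \<longleftrightarrow>
    set \<sigma> \<subseteq> S \<and> distinct \<sigma> \<and> \<tau> \<in> permutations_of_set (S - set \<sigma>)"
  using assms by (auto simp: permutations_of_set_def)

lemma bij_betw_permutations_of_set_insert:
  assumes "m \<notin> S"
  shows "bij_betw (\<lambda>(A, \<sigma>, \<tau>). \<sigma> @ m # \<tau>)
    (SIGMA A:Pow S. permutations_of_set A \<times> permutations_of_set (S - A))
    (permutations_of_set (insert m S))" (is "bij_betw ?f ?T _")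
proof (rule bij_betw_imageI)
  show "inj_on ?f ?T"
    using assms by (auto simp: inj_on_def permutations_of_set_def
        dest!: append_Cons_eq_iff[THEN iffD1, rotated 2])
  show "?f ` ?T = permutations_of_set (insert m S)"
  proof (intro equalityI subsetI)
    fix \<pi> assume \<pi>: "\<pi> \<in> permutations_of_set (insert m S)"
    then have "m \<in> set \<pi>"
      by (auto dest: permutations_of_setD)
    then obtain \<sigma> \<tau> where "\<pi> = \<sigma> @ m # \<tau>"
      by (meson split_list)
    with \<pi> show "\<pi> \<in> ?f ` ?T"
      using append_Cons_in_permutations_of_set_insert_iff[OF assms]
      by (auto simp: image_iff permutations_of_set_def intro!: bexI[of _ "(set \<sigma>, \<sigma>, \<tau>)"])
  qed (auto simp: append_Cons_in_permutations_of_set_insert_iff[OF assms],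
      auto simp: permutations_of_set_def)
qed

lemma sum_permutations_of_set_insert:
  assumes "finite S" "m \<notin> S"
  shows "(\<Sum>\<pi>\<in>permutations_of_set (insert m S). g \<pi>) =
    (\<Sum>A\<in>Pow S. \<Sum>\<sigma>\<in>permutations_of_set A. \<Sum>\<tau>\<in>permutations_of_set (S - A). g (\<sigma> @ m # \<tau>))"
  using sum.reindex_bij_betw[OF bij_betw_permutations_of_set_insert[OF assms(2)], of g] assms(1)
  by (simp add: sum.Sigma sum.cartesian_product case_prod_beta)

lemma sum_Pow_card:
  fixes F :: "nat \<Rightarrow> 'a::comm_semiring_1"
  assumes "finite S"
  shows "(\<Sum>A\<in>Pow S. F (card A)) = (\<Sum>i=0..card S. of_nat (card S choose i) * F i)"
proof -
  have "(\<Sum>A\<in>Pow S. F (card A)) = (\<Sum>i=0..card S. \<Sum>A\<in>{A\<in>Pow S. card A = i}. F (card A))"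
    using assms by (intro sum.group[symmetric]) (auto simp: card_mono)
  also have "\<dots> = (\<Sum>i=0..card S. of_nat (card S choose i) * F i)"
  proof (intro sum.cong refl)
    fix i
    have "{A\<in>Pow S. card A = i} = {A. A \<subseteq> S \<and> card A = i}" by auto
    then show "(\<Sum>A\<in>{A\<in>Pow S. card A = i}. F (card A)) = of_nat (card S choose i) * F i"
      using assms by (simp add: n_subsets)
  qed
  finally show ?thesis .
qed

lemma sum_alt_weight_append_extremum:
  fixes t q :: "'a::comm_ring_1"
  assumes "finite S" "card S = n" "A \<subseteq> S" and extremal: "\<forall>x\<in>S. if b then x < m else m < x"
  shows "(\<Sum>\<sigma>\<in>permutations_of_set A. \<Sum>\<tau>\<in>permutations_of_set (S - A). alt_weight t q 1 (\<sigma> @ m # \<tau>))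
    = Ahat (card A) t q * extremum_weight b n t q (card A) * Ahat (n - card A) (t * q ^ Suc (card A)) q"
proof -
  have "finite A" "card (S - A) = n - card A"
    using assms by (auto simp: card_Diff_subset finite_subset)
  have "(\<Sum>\<sigma>\<in>permutations_of_set A. \<Sum>\<tau>\<in>permutations_of_set (S - A). alt_weight t q 1 (\<sigma> @ m # \<tau>))
      = (\<Sum>\<sigma>\<in>permutations_of_set A. \<Sum>\<tau>\<in>permutations_of_set (S - A).
           alt_weight t q 1 \<sigma> * extremum_weight b n t q (card A) * alt_weight t q (Suc (Suc (card A))) \<tau>)"
  proof (intro sum.cong refl)
    fix \<sigma> \<tau> assume \<sigma>: "\<sigma> \<in> permutations_of_set A" and \<tau>: "\<tau> \<in> permutations_of_set (S - A)"
    have "\<forall>x \<in> set \<sigma> \<union> set \<tau>. if b then x < m else m < x"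
      using \<sigma> \<tau> assms(3) extremal by (auto dest: permutations_of_setD)
    note alt_weight_insert_extremum[OF this, of t q]
    moreover have "length \<sigma> + length \<tau> = n" "length \<sigma> = card A"
      using \<sigma> \<tau> \<open>card (S - A) = n - card A\<close> card_mono[OF assms(1,3)] assms(2)
      by (simp_all add: length_finite_permutations_of_set)
    ultimately show "alt_weight t q 1 (\<sigma> @ m # \<tau>) =
        alt_weight t q 1 \<sigma> * extremum_weight b n t q (card A) * alt_weight t q (Suc (Suc (card A))) \<tau>"
      by (simp only:)
  qed
  also have "\<dots> = (\<Sum>\<sigma>\<in>permutations_of_set A. alt_weight t q (Suc 0) \<sigma>)
      * extremum_weight b n t q (card A)
      * (\<Sum>\<tau>\<in>permutations_of_set (S - A). alt_weight t q (Suc (Suc (card A))) \<tau>)"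
    by (simp only: sum_distrib_right[where r = "extremum_weight b n t q (card A)"] sum_product One_nat_def)
  also have "\<dots> = Ahat (card A) t q * extremum_weight b n t q (card A)
      * Ahat (n - card A) (t * q ^ Suc (card A)) q"
    using \<open>finite A\<close> \<open>card (S - A) = n - card A\<close> assms(1)
    by (simp only: sum_alt_weight_permutations_eq_Ahat finite_Diff power_0 mult_1_right)
  finally show ?thesis .
qed

lemma sum_alt_weight_insert_extremum:
  fixes t q :: "'a::comm_ring_1"
  assumes "finite S" "card S = n" and extremal: "\<forall>x\<in>S. if b then x < m else m < x"
  shows "(\<Sum>\<pi>\<in>permutations_of_set (insert m S). alt_weight t q 1 \<pi>) =
    (\<Sum>i=0..n. of_nat (n choose i) *
       (Ahat i t q * extremum_weight b n t q i * Ahat (n - i) (t * q ^ Suc i) q))"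
proof -
  have "m \<notin> S"
    using extremal by auto
  have "(\<Sum>\<pi>\<in>permutations_of_set (insert m S). alt_weight t q 1 \<pi>) =
      (\<Sum>A\<in>Pow S. Ahat (card A) t q * extremum_weight b n t q (card A)
        * Ahat (n - card A) (t * q ^ Suc (card A)) q)"
    unfolding sum_permutations_of_set_insert[OF assms(1) \<open>m \<notin> S\<close>]
    using assms by (intro sum.cong refl sum_alt_weight_append_extremum) auto
  also have "\<dots> = (\<Sum>i=0..n. of_nat (n choose i) *
       (Ahat i t q * extremum_weight b n t q i * Ahat (n - i) (t * q ^ Suc i) q))"
    using sum_Pow_card[OF assms(1), where F = "\<lambda>i. Ahat i t q * extremum_weight b n t q i
        * Ahat (n - i) (t * q ^ Suc i) q"] assms(2)
    by (simp only:)
  finally show ?thesis .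
qed

lemma Ahat_Suc_extremum:
  "Ahat (Suc n) t q = (\<Sum>i=0..n. of_nat (n choose i) *
     (Ahat i t q * extremum_weight b n t q i * Ahat (n - i) (t * q ^ Suc i) q))"
proof -
  obtain m S where "{1..Suc n} = insert m S" "finite S" "card S = n"
    and "\<forall>x\<in>S. if b then x < m else m < x"
  proof (cases b)
    case True
    show thesis
      by (rule that[of "Suc n" "{1..n}"]) (use True in auto)
  next
    case False
    show thesis
      by (rule that[of 1 "{2..Suc n}"]) (use False in auto)
  qed
  then show ?thesis
    unfolding Ahat_eq_sum_alt_weight[of "Suc n"] by (simp only: sum_alt_weight_insert_extremum)
qed

lemma extremum_weight_True_add_False:
  assumes "0 < n" "i \<le> n"
  shows "extremum_weight True n t q i + extremum_weight False n t q i =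
    (if i = 0 then 1 + t * q else if i = n then 1 + t * q ^ n else 1 + t ^ 2 * q ^ (2 * i + 1))"
proof -
  have "q ^ (2 * i + 1) = q ^ i * q ^ Suc i"
    by (simp add: mult_2 power_add)
  then show ?thesis
    using assms by (auto simp: extremum_weight_def power2_eq_square mult_ac)
qed

theorem theorem2p2:
  fixes t q :: "'a::comm_ring_1" and n :: nat
  assumes "n \<ge> 1"
  shows "2 * Ahat (n + 1) t q =
           (1 + t * q) * Ahat n (t * q) q + (1 + t * q ^ n) * Ahat n t q
           + (\<Sum>i = 1..n - 1. (1 + t ^ 2 * q ^ (2 * i + 1)) * of_nat (n choose i)
                 * Ahat i t q * Ahat (n - i) (t * q ^ (i + 1)) q)
         \<and> Ahat 1 t q = 1"
proof -
  define f where "f i = (extremum_weight True n t q i + extremum_weight False n t q i)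
    * of_nat (n choose i) * Ahat i t q * Ahat (n - i) (t * q ^ (i + 1)) q" for i
  obtain k where n: "n = Suc k" using assms by (cases n) auto
  have "2 * Ahat (n + 1) t q = Ahat (Suc n) t q + Ahat (Suc n) t q"
    by (simp only: mult_2 Suc_eq_plus1)
  also have "\<dots> = (\<Sum>i=0..n. of_nat (n choose i) *
        (Ahat i t q * extremum_weight True n t q i * Ahat (n - i) (t * q ^ Suc i) q))
      + (\<Sum>i=0..n. of_nat (n choose i) *
        (Ahat i t q * extremum_weight False n t q i * Ahat (n - i) (t * q ^ Suc i) q))"
    by (rule arg_cong2[where f = "(+)"]) (rule Ahat_Suc_extremum)+
  also have "\<dots> = (\<Sum>i=0..n. f i)"
    unfolding sum.distrib[symmetric] f_def by (intro sum.cong refl) (simp add: ring_distribs mult_ac)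
  also have "\<dots> = f 0 + f n + (\<Sum>i = 1..n - 1. f i)"
    unfolding n by (simp add: sum.atLeast_Suc_atMost)
  moreover have "f 0 = (1 + t * q) * Ahat n (t * q) q" "f n = (1 + t * q ^ n) * Ahat n t q"
    using n by (simp_all add: f_def extremum_weight_True_add_False Ahat_0)
  moreover have "(\<Sum>i = 1..n - 1. f i) = (\<Sum>i = 1..n - 1. (1 + t ^ 2 * q ^ (2 * i + 1))
      * of_nat (n choose i) * Ahat i t q * Ahat (n - i) (t * q ^ (i + 1)) q)"
    using n by (intro sum.cong refl) (simp add: f_def extremum_weight_True_add_False)
  ultimately show ?thesis
    using Ahat_1 by simp
qed

end
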